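(* Let $(S,\rightarrow)$ be a PNTS, $X$ a variable and $\rho$ an interpretation. Then for every $s\in S$: (i) $\llbracket\mathbb P_{>0}(\Diamond X)\rrbracket_\rho(s)=1$ iff there exists $t\in S$ with $s\rightsquigarrow t$ and $\rho(X)(t)>0$; (ii) $\llbracket\mathbb P_{=1}(\Box X)\rrbracket_\rho(s)=1$ iff for all $t\in S$, $s\rightsquigarrow t$ implies $\rho(X)(t)=1$.
   Context: A PNTS is $(S,\rightarrow)$ with $\rightarrow\subseteq S\times\mathcal D(S)$, $\mathcal D(S)$ the probability distributions $d:S\to[0,1]$ with $\sum_sd(s)=1$. $s\rightsquigarrow t$ iff there is $d$ with $s\to d$ and $d(t)>0$. An interpretation $\rho$ assigns functions $S\to[0,1]$ to variables. Semantics: $\llbracket X\rrbracket_\rho=\rho(X)$, $\llbracket\Diamond\phi\rrbracket_\rho(x)=\sup_{x\to d}\sum_yd(y)\llbracket\phi\rrbracket_\rho(y)$ (empty sup $=0$), $\llbracket\Box\phi\rrbracket_\rho(x)=\inf_{x\to d}\sum_yd(y)\llbracket\phi\rrbracket_\rho(y)$ (empty inf $=1$), $\oplus$ and $\odot$ pointwise $\min(1,a+b)$ and $\max(0,a+b-1)$, and $\mu Y.\phi$, $\nu Y.\phi$ least/greatest fixed points of $f\mapsto\llbracket\phi\rrbracket_{\rho[f/Y]}$. $\mathbb P_{>0}\phi=\mu Y.(Y\oplus\phi)$ and $\mathbb P_{=1}\phi=\nu Y.(Y\odot\phi)$ with $Y$ not occurring in $\phi$. *)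

theory Defs
  imports "HOL-Probability.Probability"
begin

text \<open>A PNTS on the state type 's (S = UNIV) is a relation trans s d between states
 and probability distributions (pmfs; a sum-1 function has countable support).\<close>
type_synonym 's pnts = "'s \<Rightarrow> 's pmf \<Rightarrow> bool"

definition reach :: "'s pnts \<Rightarrow> 's \<Rightarrow> 's \<Rightarrow> bool" where
  "reach T s t \<longleftrightarrow> (\<exists>d. T s d \<and> pmf d t > 0)"

datatype 'v form =
    Var 'v
  | Dia "'v form"
  | Box "'v form"
  | Oplus "'v form" "'v form"
  | Odot "'v form" "'v form"
  | Mu 'v "'v form"
  | Nu 'v "'v form"

definition unit_valued :: "('s \<Rightarrow> real) \<Rightarrow> bool" where
  "unit_valued f \<longleftrightarrow> (\<forall>y. 0 \<le> f y \<and> f y \<le> 1)"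

text \<open>Least / greatest fixed points in the complete lattice of functions S \<rightarrow> [0,1]
 (Knaster--Tarski: pointwise meet of prefixed points, join of postfixed points).\<close>
definition lfpR :: "(('s \<Rightarrow> real) \<Rightarrow> ('s \<Rightarrow> real)) \<Rightarrow> 's \<Rightarrow> real" where
  "lfpR F = (\<lambda>x. Inf {f x | f. unit_valued f \<and> (\<forall>y. F f y \<le> f y)})"

definition gfpR :: "(('s \<Rightarrow> real) \<Rightarrow> ('s \<Rightarrow> real)) \<Rightarrow> 's \<Rightarrow> real" where
  "gfpR F = (\<lambda>x. Sup {f x | f. unit_valued f \<and> (\<forall>y. f y \<le> F f y)})"

definition expect :: "'s pmf \<Rightarrow> ('s \<Rightarrow> real) \<Rightarrow> real" where
  "expect d f = (\<Sum>\<^sub>\<infinity>y. pmf d y * f y)"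

definition dia_op :: "'s pnts \<Rightarrow> ('s \<Rightarrow> real) \<Rightarrow> 's \<Rightarrow> real" where
  "dia_op T f x = (if {d. T x d} = {} then 0 else Sup {expect d f | d. T x d})"

definition box_op :: "'s pnts \<Rightarrow> ('s \<Rightarrow> real) \<Rightarrow> 's \<Rightarrow> real" where
  "box_op T f x = (if {d. T x d} = {} then 1 else Inf {expect d f | d. T x d})"

primrec sem :: "'s pnts \<Rightarrow> ('v \<Rightarrow> 's \<Rightarrow> real) \<Rightarrow> 'v form \<Rightarrow> 's \<Rightarrow> real" where
  "sem T \<rho> (Var X) = \<rho> X"
| "sem T \<rho> (Dia \<phi>) = dia_op T (sem T \<rho> \<phi>)"
| "sem T \<rho> (Box \<phi>) = box_op T (sem T \<rho> \<phi>)"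
| "sem T \<rho> (Oplus \<phi> \<psi>) = (\<lambda>x. min 1 (sem T \<rho> \<phi> x + sem T \<rho> \<psi> x))"
| "sem T \<rho> (Odot \<phi> \<psi>) = (\<lambda>x. max 0 (sem T \<rho> \<phi> x + sem T \<rho> \<psi> x - 1))"
| "sem T \<rho> (Mu Y \<phi>) = lfpR (\<lambda>f. sem T (\<rho>(Y := f)) \<phi>)"
| "sem T \<rho> (Nu Y \<phi>) = gfpR (\<lambda>f. sem T (\<rho>(Y := f)) \<phi>)"

primrec vars :: "'v form \<Rightarrow> 'v set" where
  "vars (Var X) = {X}"
| "vars (Dia \<phi>) = vars \<phi>"
| "vars (Box \<phi>) = vars \<phi>"
| "vars (Oplus \<phi> \<psi>) = vars \<phi> \<union> vars \<psi>"
| "vars (Odot \<phi> \<psi>) = vars \<phi> \<union> vars \<psi>"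
| "vars (Mu Y \<phi>) = insert Y (vars \<phi>)"
| "vars (Nu Y \<phi>) = insert Y (vars \<phi>)"

definition Ppos :: "'v \<Rightarrow> 'v form \<Rightarrow> 'v form" where
  "Ppos Y \<phi> = Mu Y (Oplus (Var Y) \<phi>)"

definition Pone :: "'v \<Rightarrow> 'v form \<Rightarrow> 'v form" where
  "Pone Y \<phi> = Nu Y (Odot (Var Y) \<phi>)"

definition is_interp :: "('v \<Rightarrow> 's \<Rightarrow> real) \<Rightarrow> bool" where
  "is_interp \<rho> \<longleftrightarrow> (\<forall>X. unit_valued (\<rho> X))"

end

theory Submission
  imports Defs
begin

text \<open>Both fixed points can be computed pointwise.  Since \<open>min 1 (f x + g x) \<le> f x\<close> forces
  \<open>f x = 1\<close> wherever \<open>g x > 0\<close>, the least prefixed point of \<open>f \<mapsto> min 1 (f + g)\<close> is the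
  indicator of \<open>g > 0\<close>; dually the greatest postfixed point of \<open>f \<mapsto> max 0 (f + h - 1)\<close> is the
  indicator of \<open>h \<ge> 1\<close>.  It remains to note that \<open>\<Diamond>X\<close> is positive at \<open>s\<close> iff some
  distribution enabled at \<open>s\<close> puts mass on a state where \<open>X\<close> is positive, and that \<open>\<box>X\<close> is \<open>1\<close>
  at \<open>s\<close> iff every such distribution is concentrated on states where \<open>X\<close> is \<open>1\<close>.\<close>

lemma infsum_pmf_UNIV: "(\<Sum>\<^sub>\<infinity>y. pmf d y) = 1"
  using infsetsum_infsum[OF pmf_abs_summable[of d UNIV]] infsetsum_pmf_eq_1[of d UNIV] by simp

lemma pmf_summable_on_UNIV: "pmf d summable_on UNIV"
  using infsum_pmf_UNIV[of d] infsum_not_exists by fastforce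

lemma summable_on_pmf_times_unit_valued:
  assumes "unit_valued f"
  shows "(\<lambda>y. pmf d y * f y) summable_on UNIV"
  using assms unfolding unit_valued_def
  by (intro summable_on_comparison_test[OF pmf_summable_on_UNIV]) (auto intro: mult_left_le)

lemma expect_nonneg:
  assumes "unit_valued f"
  shows "0 \<le> expect d f"
  using assms unfolding expect_def unit_valued_def by (auto intro!: infsum_nonneg)

lemma expect_le_1:
  assumes "unit_valued f"
  shows "expect d f \<le> 1"
proof -
  have "expect d f \<le> (\<Sum>\<^sub>\<infinity>y. pmf d y)"
    unfolding expect_def
    using assms unfolding unit_valued_def
    by (intro infsum_mono[OF summable_on_pmf_times_unit_valued[OF assms] pmf_summable_on_UNIV])
       (auto intro: mult_left_le)
  then show ?thesis
    by (simp add: infsum_pmf_UNIV)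
qed

lemma expect_pos_iff:
  assumes "unit_valued f"
  shows "0 < expect d f \<longleftrightarrow> (\<exists>y. 0 < pmf d y \<and> 0 < f y)"
proof
  assume pos: "0 < expect d f"
  show "\<exists>y. 0 < pmf d y \<and> 0 < f y"
  proof (rule ccontr)
    assume "\<not> ?thesis"
    then have "\<And>y. pmf d y * f y = 0"
      using assms unfolding unit_valued_def by (metis antisym_conv1 mult_eq_0_iff pmf_nonneg)
    then have "expect d f = 0"
      unfolding expect_def by (simp add: infsum_0)
    with pos show False
      by simp
  qed
next
  assume "\<exists>y. 0 < pmf d y \<and> 0 < f y"
  then obtain y where "0 < pmf d y" "0 < f y"
    by blast
  then have "0 < (\<Sum>z\<in>{y}. pmf d z * f z)"
    by simp
  also have "\<dots> \<le> expect d f"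
    unfolding expect_def
    using assms unfolding unit_valued_def
    by (intro finite_sum_le_infsum[OF summable_on_pmf_times_unit_valued[OF assms]]) auto
  finally show "0 < expect d f" .
qed

lemma expect_ge_1_iff:
  assumes "unit_valued f"
  shows "1 \<le> expect d f \<longleftrightarrow> (\<forall>y. 0 < pmf d y \<longrightarrow> f y = 1)"
proof
  assume ge: "1 \<le> expect d f"
  have compl: "unit_valued (\<lambda>y. 1 - f y)"
    using assms unfolding unit_valued_def by auto
  have "expect d f + expect d (\<lambda>y. 1 - f y) = (\<Sum>\<^sub>\<infinity>y. pmf d y * f y + pmf d y * (1 - f y))"
    unfolding expect_def
    by (rule infsum_add[symmetric, OF summable_on_pmf_times_unit_valued[OF assms]
          summable_on_pmf_times_unit_valued[OF compl]])
  also have "\<dots> = (\<Sum>\<^sub>\<infinity>y. pmf d y)"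
    by (simp add: algebra_simps)
  also have "\<dots> = 1"
    by (rule infsum_pmf_UNIV)
  finally have "expect d (\<lambda>y. 1 - f y) \<le> 0"
    using ge by simp
  then have "\<And>y. pmf d y * (1 - f y) = 0"
    using nonneg_infsum_le_0D[OF _ summable_on_pmf_times_unit_valued[OF compl]] compl
    unfolding expect_def unit_valued_def by auto
  then show "\<forall>y. 0 < pmf d y \<longrightarrow> f y = 1"
    by (metis eq_iff_diff_eq_0 less_numeral_extra(3) mult_eq_0_iff)
next
  assume "\<forall>y. 0 < pmf d y \<longrightarrow> f y = 1"
  then have "(\<lambda>y. pmf d y * f y) = pmf d"
    by (intro ext) (metis less_eq_real_def mult.right_neutral mult_zero_left pmf_nonneg)
  then show "1 \<le> expect d f"
    unfolding expect_def by (simp add: infsum_pmf_UNIV)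
qed

lemma lfpR_min_1_add:
  assumes g_nonneg: "\<And>x. 0 \<le> g x"
  shows "lfpR (\<lambda>f x. min 1 (f x + g x)) s = (if 0 < g s then 1 else 0)"
proof -
  let ?S = "{f s | f. unit_valued f \<and> (\<forall>y. min 1 (f y + g y) \<le> f y)}"
  have lfpR_eq: "lfpR (\<lambda>f x. min 1 (f x + g x)) s = Inf ?S"
    unfolding lfpR_def by simp
  show ?thesis
  proof (cases "0 < g s")
    case True
    have "?S = {1}"
    proof safe
      fix f
      assume f: "unit_valued f" "\<forall>y. min 1 (f y + g y) \<le> f y"
      then have "f s \<le> 1" "min 1 (f s + g s) \<le> f s"
        unfolding unit_valued_def by auto
      with True show "f s = 1"
        by (auto simp: min_def split: if_splits)
    next
      show "\<exists>f. 1 = f s \<and> unit_valued f \<and> (\<forall>y. min 1 (f y + g y) \<le> f y)"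
        by (rule exI[of _ "\<lambda>_. 1"]) (auto simp: unit_valued_def)
    qed
    with True lfpR_eq show ?thesis
      by simp
  next
    case False
    define I where "I = (\<lambda>x. if 0 < g x then 1 else 0 :: real)"
    have "unit_valued I \<and> (\<forall>y. min 1 (I y + g y) \<le> I y)"
      unfolding I_def unit_valued_def using g_nonneg by (auto simp: not_less intro: antisym)
    then have "I s \<in> ?S"
      by blast
    moreover have "I s = 0"
      using False by (simp add: I_def)
    moreover have "\<forall>x\<in>?S. 0 \<le> x"
      by (auto simp: unit_valued_def)
    ultimately have "Inf ?S = 0"
      by (metis (no_types, lifting) cInf_eq_minimum)
    with False lfpR_eq show ?thesis
      by simp
  qed
qed

lemma gfpR_max_0_add:
  "gfpR (\<lambda>f x. max 0 (f x + h x - 1)) s = (if 1 \<le> h s then 1 else 0)"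
proof -
  let ?S = "{f s | f. unit_valued f \<and> (\<forall>y. f y \<le> max 0 (f y + h y - 1))}"
  have gfpR_eq: "gfpR (\<lambda>f x. max 0 (f x + h x - 1)) s = Sup ?S"
    unfolding gfpR_def by simp
  show ?thesis
  proof (cases "1 \<le> h s")
    case True
    define J where "J = (\<lambda>x. if 1 \<le> h x then 1 else 0 :: real)"
    have "unit_valued J \<and> (\<forall>y. J y \<le> max 0 (J y + h y - 1))"
      unfolding J_def unit_valued_def by auto
    then have "J s \<in> ?S"
      by blast
    moreover have "J s = 1"
      using True by (simp add: J_def)
    moreover have "\<forall>x\<in>?S. x \<le> 1"
      by (auto simp: unit_valued_def)
    ultimately have "Sup ?S = 1"
      by (metis (no_types, lifting) cSup_eq_maximum)
    with True gfpR_eq show ?thesis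
      by simp
  next
    case False
    have "?S = {0}"
    proof safe
      fix f
      assume f: "unit_valued f" "\<forall>y. f y \<le> max 0 (f y + h y - 1)"
      then have "0 \<le> f s" "f s \<le> max 0 (f s + h s - 1)"
        unfolding unit_valued_def by auto
      with False show "f s = 0"
        by (auto simp: max_def split: if_splits)
    next
      show "\<exists>f. 0 = f s \<and> unit_valued f \<and> (\<forall>y. f y \<le> max 0 (f y + h y - 1))"
        by (rule exI[of _ "\<lambda>_. 0"]) (auto simp: unit_valued_def)
    qed
    with False gfpR_eq show ?thesis
      by simp
  qed
qed

lemma dia_op_nonneg:
  assumes "unit_valued f"
  shows "0 \<le> dia_op T f x"
proof (cases "{d. T x d} = {}")
  case False
  then obtain d where "T x d"
    by auto
  have "bdd_above {expect d f | d. T x d}"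
    using expect_le_1[OF assms] by (intro bdd_aboveI[where M = 1]) auto
  then have "expect d f \<le> Sup {expect d f | d. T x d}"
    using \<open>T x d\<close> by (intro cSup_upper) auto
  with False expect_nonneg[OF assms, of d] show ?thesis
    unfolding dia_op_def by simp
qed (simp add: dia_op_def)

lemma dia_op_pos_iff:
  assumes "unit_valued f"
  shows "0 < dia_op T f x \<longleftrightarrow> (\<exists>t. reach T x t \<and> 0 < f t)"
proof (cases "{d. T x d} = {}")
  case False
  let ?E = "{expect d f | d. T x d}"
  have "bdd_above ?E"
    using expect_le_1[OF assms] by (intro bdd_aboveI[where M = 1]) auto
  moreover have "?E \<noteq> {}"
    using False by auto
  ultimately have "0 < dia_op T f x \<longleftrightarrow> (\<exists>e\<in>?E. 0 < e)"
    using False less_cSup_iff[of ?E 0] unfolding dia_op_def by simp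
  also have "\<dots> \<longleftrightarrow> (\<exists>t. reach T x t \<and> 0 < f t)"
    using expect_pos_iff[OF assms] unfolding reach_def by blast
  finally show ?thesis .
qed (auto simp: dia_op_def reach_def)

lemma box_op_ge_1_iff:
  assumes "unit_valued f"
  shows "1 \<le> box_op T f x \<longleftrightarrow> (\<forall>t. reach T x t \<longrightarrow> f t = 1)"
proof (cases "{d. T x d} = {}")
  case False
  let ?E = "{expect d f | d. T x d}"
  have "bdd_below ?E"
    using expect_nonneg[OF assms] by (intro bdd_belowI[where m = 0]) auto
  moreover have "?E \<noteq> {}"
    using False by auto
  ultimately have "1 \<le> box_op T f x \<longleftrightarrow> (\<forall>e\<in>?E. 1 \<le> e)"
    using False le_cInf_iff[of ?E 1] unfolding box_op_def by simp
  also have "\<dots> \<longleftrightarrow> (\<forall>t. reach T x t \<longrightarrow> f t = 1)"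
    using expect_ge_1_iff[OF assms] unfolding reach_def by blast
  finally show ?thesis .
qed (auto simp: box_op_def reach_def)

theorem mainTheorem10:
  fixes T :: "'s pnts" and \<rho> :: "'v \<Rightarrow> 's \<Rightarrow> real" and X Y :: 'v and s :: 's
  assumes "is_interp \<rho>"
    and "Y \<notin> vars (Dia (Var X))" and "Y \<notin> vars (Box (Var X))"
  shows "(sem T \<rho> (Ppos Y (Dia (Var X))) s = 1 \<longleftrightarrow> (\<exists>t. reach T s t \<and> \<rho> X t > 0))
       \<and> (sem T \<rho> (Pone Y (Box (Var X))) s = 1 \<longleftrightarrow> (\<forall>t. reach T s t \<longrightarrow> \<rho> X t = 1))"
proof -
  have "Y \<noteq> X"
    using assms(2) by simp
  have X_unit: "unit_valued (\<rho> X)"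
    using assms(1) unfolding is_interp_def by simp
  have "sem T \<rho> (Ppos Y (Dia (Var X))) s = (if 0 < dia_op T (\<rho> X) s then 1 else 0)"
    using \<open>Y \<noteq> X\<close> lfpR_min_1_add[of "dia_op T (\<rho> X)", OF dia_op_nonneg[OF X_unit]]
    by (simp add: Ppos_def)
  then have "sem T \<rho> (Ppos Y (Dia (Var X))) s = 1 \<longleftrightarrow> (\<exists>t. reach T s t \<and> \<rho> X t > 0)"
    using dia_op_pos_iff[OF X_unit, of T s] by simp
  moreover have "sem T \<rho> (Pone Y (Box (Var X))) s = (if 1 \<le> box_op T (\<rho> X) s then 1 else 0)"
    using \<open>Y \<noteq> X\<close> gfpR_max_0_add[of "box_op T (\<rho> X)"] by (simp add: Pone_def)
  then have "sem T \<rho> (Pone Y (Box (Var X))) s = 1 \<longleftrightarrow> (\<forall>t. reach T s t \<longrightarrow> \<rho> X t = 1)"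
    using box_op_ge_1_iff[OF X_unit, of T s] by simp
  ultimately show ?thesis
    by blast
qed

end
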